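(* Let $\mathcal{A}$ be a finite alphabet, $n\ge0$, and $N=[1,n]=\{1,\dots,n\}$. Then (i) $|\overline{L}_{\mathcal{A}}(n)/\mathcal{S}_{\mathcal{A}}|=|\overline{G}_{\mathcal{A}}(N)/\hat{\mathcal{S}}_{\mathcal{A}}(n+1)|=|\overline{G}_{\mathcal{A}}(N)/{\sim}|=|\overline{G}_{\mathcal{A}}(N)/{\cong}|$; (ii) $|L_{\mathcal{A}}(n)/\mathcal{S}_{\mathcal{A}}|=|G_{\mathcal{A}}(N)/\hat{\mathcal{S}}_{\mathcal{A}}(n+1)|$; (iii) $|\overline{G}_{\mathcal{A}}(N)/\hat{\mathcal{S}}_{\mathcal{A}}(n+1)|\le|G_{\mathcal{A}}(N)/{\sim}|\le|G_{\mathcal{A}}(N)/{\cong}|\le|G_{\mathcal{A}}(N)/\hat{\mathcal{S}}_{\mathcal{A}}(n+1)|$.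
   Context: $L_{\mathcal{A}}(n)$ is the set of $f:\mathcal{A}^n\to\mathcal{A}$; $\overline{L}_{\mathcal{A}}(n)$ the irreducible ones (depending on every argument). $\mathcal{S}_{\mathcal{A}}=\{1,r\}\times S_{\mathcal{A}}$ ($S_{\mathcal{A}}$ the permutations of $\mathcal{A}$) acts on rules by $\hat\nu f(w)=\nu f(\nu^{-1}w)$ (letterwise) and $\hat rf(w)=f(rw)$, $r$ reversing words. For $f:\mathcal{A}^n\to\mathcal{A}$, $\Phi^N_f(x)_i=f(x_{i+1}\dots x_{i+n})$; $G_{\mathcal{A}}(N)=\{\Phi^N_f\mid f\in L_{\mathcal{A}}(n)\}$, $\overline{G}_{\mathcal{A}}(N)=\{\Phi^N_f\mid f\in\overline{L}_{\mathcal{A}}(n)\}$. Operators on global maps: $\sigma\Phi=\sigma\circ\Phi$ with $(\sigma x)_i=x_{i+1}$; $\hat\nu\Phi(x)=\nu\Phi(\nu^{-1}x)$; $\hat r\Phi(x)=r\Phi(rx)$ with $(rx)_i=x_{-i}$. $\hat{\mathcal{S}}_{\mathcal{A}}(n+1)$ is the group generated by $\sigma^{n+1}\hat r$ and all $\hat\nu$, $\nu\in S_{\mathcal{A}}$; it acts on $G_{\mathcal{A}}(N)$ and on $\overline G_{\mathcal{A}}(N)$. $\Phi\cong\Psi$ iff $\Psi=\tau\Phi$ for some $\tau$ in the group generated by $\sigma,\hat r,\hat\nu$. Scaling: for positive rational $v$ and a global map with a representation $\Phi=\Phi^M_f$, $vM\subseteq\mathbb{Z}$, put $\hat s_v\Phi=\Phi^{vM}_f$;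 $\Phi\sim\Psi$ iff there exist global maps $\Phi',\Psi'$ and a positive rational $v$ with $\Phi\cong\Phi'$, $\Psi\cong\Psi'$, $\Psi'=\hat s_v\Phi'$. For a set $X$ of global maps, $X/{\cong}$ and $X/{\sim}$ denote the classes of the restricted relations, and $X/\hat{\mathcal{S}}_{\mathcal{A}}(n+1)$ the orbits. *)

theory Defs
  imports Complex_Main
begin

type_synonym 'a cfg = "int \<Rightarrow> 'a"
type_synonym 'a gmap = "'a cfg \<Rightarrow> 'a cfg"

text \<open>L_A(n): functions A^n -> A, represented as functions on words (lists) that are
  undefined (extensionally) off words of length n.\<close>
definition Lrules :: "nat \<Rightarrow> ('a list \<Rightarrow> 'a) set" where
  "Lrules n = {f. \<forall>w. length w \<noteq> n \<longrightarrow> f w = undefined}"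

definition Lbar :: "nat \<Rightarrow> ('a list \<Rightarrow> 'a) set" where
  "Lbar n = {f \<in> Lrules n. \<forall>i<n. \<exists>w a. length w = n \<and> f (w[i := a]) \<noteq> f w}"

text \<open>Orbit relation of S_A = {1,r} x S_A acting by
  (r^b, nu) f (w) = nu (f (nu^-1 (r^b w))).\<close>
definition rule_orbit_rel :: "nat \<Rightarrow> ('a list \<Rightarrow> 'a) \<Rightarrow> ('a list \<Rightarrow> 'a) \<Rightarrow> bool" where
  "rule_orbit_rel n f g \<longleftrightarrow> (\<exists>\<nu> b. bij \<nu> \<and>
     (\<forall>w. length w = n \<longrightarrow> g w = \<nu> (f (map (inv \<nu>) (if b then rev w else w)))))"

definition global :: "int set \<Rightarrow> ('a list \<Rightarrow> 'a) \<Rightarrow> 'a gmap" where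
  "global M f = (\<lambda>x i. f (map (\<lambda>m. x (i + m)) (sorted_list_of_set M)))"

definition G :: "nat \<Rightarrow> 'a gmap set" where
  "G n = {global {1..int n} f | f. f \<in> Lrules n}"

definition Gbar :: "nat \<Rightarrow> 'a gmap set" where
  "Gbar n = {global {1..int n} f | f. f \<in> Lbar n}"

definition shift :: "'a cfg \<Rightarrow> 'a cfg" where
  "shift x = (\<lambda>i. x (i + 1))"

definition refl_cfg :: "'a cfg \<Rightarrow> 'a cfg" where
  "refl_cfg x = (\<lambda>i. x (- i))"

definition shift_hat :: "'a gmap \<Rightarrow> 'a gmap" where
  "shift_hat \<Phi> = shift \<circ> \<Phi>"

definition refl_hat :: "'a gmap \<Rightarrow> 'a gmap" where
  "refl_hat \<Phi> = refl_cfg \<circ> \<Phi> \<circ> refl_cfg"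

definition perm_hat :: "('a \<Rightarrow> 'a) \<Rightarrow> 'a gmap \<Rightarrow> 'a gmap" where
  "perm_hat \<nu> \<Phi> = (\<lambda>x. \<nu> \<circ> \<Phi> (inv \<nu> \<circ> x))"

text \<open>Orbit relation of the group generated by a set T of bijections:
  equivalence closure of the one-step relation.\<close>
definition gen_orbit :: "('b \<Rightarrow> 'b) set \<Rightarrow> 'b \<Rightarrow> 'b \<Rightarrow> bool" where
  "gen_orbit T = (\<lambda>x y. \<exists>t\<in>T. y = t x \<or> x = t y)\<^sup>*\<^sup>*"

definition Shat_gens :: "nat \<Rightarrow> ('a gmap \<Rightarrow> 'a gmap) set" where
  "Shat_gens n = {\<lambda>\<Phi>. (shift_hat ^^ (n + 1)) (refl_hat \<Phi>)} \<union> {perm_hat \<nu> | \<nu>. bij \<nu>}"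

definition cong_gens :: "('a gmap \<Rightarrow> 'a gmap) set" where
  "cong_gens = {shift_hat, refl_hat} \<union> {perm_hat \<nu> | \<nu>. bij \<nu>}"

definition gcong :: "'a gmap \<Rightarrow> 'a gmap \<Rightarrow> bool" where
  "gcong = gen_orbit cong_gens"

definition scaled :: "rat \<Rightarrow> 'a gmap \<Rightarrow> 'a gmap \<Rightarrow> bool" where
  "scaled v \<Phi> \<Psi> \<longleftrightarrow> (\<exists>M f. finite M \<and> (\<forall>m\<in>M. v * of_int m \<in> \<int>) \<and>
      \<Phi> = global M f \<and> \<Psi> = global ((\<lambda>m. \<lfloor>v * of_int m\<rfloor>) ` M) f)"

definition gsim :: "'a gmap \<Rightarrow> 'a gmap \<Rightarrow> bool" where
  "gsim \<Phi> \<Psi> \<longleftrightarrow> (\<exists>\<Phi>' \<Psi>' v. v > 0 \<and> gcong \<Phi> \<Phi>' \<and> gcong \<Psi> \<Psi>' \<and> scaled v \<Phi>' \<Psi>')"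

definition quot :: "'b set \<Rightarrow> ('b \<Rightarrow> 'b \<Rightarrow> bool) \<Rightarrow> 'b set set" where
  "quot X R = X // {(x, y). x \<in> X \<and> y \<in> X \<and> R x y}"

end

theory Submission
  imports Defs
begin

(* Every map in G_A(N) is Phi^N_f for a unique f in L_A(n), and on such window maps the
   generators of hat S_A(n+1) act exactly as S_A acts on rules: sigma^(n+1) r-hat reflects the
   window [1, n] onto itself and reverses the rule, nu-hat conjugates it by nu. This gives the
   equalities between rule orbits and hat S_A(n+1)-orbits. The inequalities hold because
   hat S_A(n+1)-orbits refine congruence classes, which refine similarity classes.
   An irreducible rule reads every cell of its window, so the window of any representation of
   the map is determined by the map. Congruences only translate windows and rescalings map them
   monotonically, so two similar irreducible window maps differ by a translation of the window
   and an element of S_A acting on the rule, i.e. they lie in one hat S_A(n+1)-orbit. *)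

section \<open>Global maps given by a window of cells\<close>

definition global_list :: "int list \<Rightarrow> ('a list \<Rightarrow> 'a) \<Rightarrow> 'a gmap" where
  "global_list L f = (\<lambda>x i. f (map (\<lambda>m. x (i + m)) L))"

lemma global_eq_global_list: "global M f = global_list (sorted_list_of_set M) f"
  by (simp add: global_def global_list_def)

lemma global_interval: "global {a..b} f = global_list [a..b] f"
  by (simp add: global_eq_global_list)

lemma global_list_eq_iff:
  "global_list L f = global_list L' f' \<longleftrightarrow> (\<forall>y. f (map y L) = f' (map y L'))"
proof (intro iffI allI)
  fix y assume "global_list L f = global_list L' f'"
  then have "global_list L f y 0 = global_list L' f' y 0" by simp
  then show "f (map y L) = f' (map y L')" by (simp add: global_list_def)
next
  assume "\<forall>y. f (map y L) = f' (map y L')"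
  then show "global_list L f = global_list L' f'" by (simp add: global_list_def fun_eq_iff)
qed

lemma global_list_map:
  "global_list L f = global_list L' f' \<Longrightarrow> global_list (map s L) f = global_list (map s L') f'"
  by (simp add: global_list_eq_iff)

lemma global_list_cong:
  "(\<And>w. length w = length L \<Longrightarrow> f w = g w) \<Longrightarrow> global_list L f = global_list L g"
  by (simp add: global_list_def fun_eq_iff)

lemma ex_map_eq_distinct:
  assumes "distinct Q" "length w = length Q"
  shows "\<exists>y. map y Q = w"
proof
  show "map (\<lambda>m. the (map_of (zip Q w) m)) Q = w"
    using assms by (auto intro!: nth_equalityI simp: map_of_zip_nth)
qed

lemma global_list_eq_on_words:
  assumes "global_list Q f = global_list Q g" "distinct Q" "length w = length Q"
  shows "f w = g w"
  using assms ex_map_eq_distinct global_list_eq_iff by metis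

definition depends_on_all :: "nat \<Rightarrow> ('a list \<Rightarrow> 'a) \<Rightarrow> bool" where
  "depends_on_all n f \<longleftrightarrow> (\<forall>i<n. \<exists>w a. length w = n \<and> f (w[i := a]) \<noteq> f w)"

lemma window_unique:
  assumes eq: "global_list P f = global_list Q g" and len: "length P = length Q"
    and "sorted P" "sorted Q" "distinct Q" and dep: "depends_on_all (length Q) g"
  shows "P = Q"
proof -
  txt \<open>A cell of Q not read through P could be changed without changing g.\<close>
  have sub: "set Q \<subseteq> set P"
  proof
    fix q assume "q \<in> set Q"
    then obtain i where i: "i < length Q" "Q ! i = q" by (auto simp: in_set_conv_nth)
    obtain w a where w: "length w = length Q" "g (w[i := a]) \<noteq> g w"
      using dep i unfolding depends_on_all_def by blast
    obtain y where y: "map y Q = w" using ex_map_eq_distinct \<open>distinct Q\<close> w(1) by blast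
    have upd: "map (y(q := a)) Q = w[i := a]"
      using y i \<open>distinct Q\<close> by (auto intro!: nth_equalityI simp: nth_list_update nth_eq_iff_index_eq)
    show "q \<in> set P"
    proof (rule ccontr)
      assume "q \<notin> set P"
      then have "map (y(q := a)) P = map y P" by simp
      then show False using eq w(2) y upd by (metis global_list_eq_iff)
    qed
  qed
  have "card (set Q) = length P" using \<open>distinct Q\<close> len distinct_card by metis
  moreover have "card (set P) \<le> length P" by (rule card_length)
  ultimately have "card (set P) = length P" "set P = set Q"
    using card_mono[OF finite_set sub] card_subset_eq[OF finite_set sub] by auto
  then show "P = Q"
    using card_distinct sorted_distinct_set_unique \<open>sorted P\<close> \<open>sorted Q\<close> \<open>distinct Q\<close> by metis
qed

lemma map_add_upto: "map (\<lambda>m. m + c) [a..b] = [a + c..b + c]"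
  by (rule nth_equalityI) auto

lemma map_uminus_upto: "map uminus [a..b] = rev [- b..- a]"
  by (rule nth_equalityI) (auto simp: rev_nth)

lemma shift_hat_global_list: "shift_hat (global_list [a..b] f) = global_list [a + 1..b + 1] f"
  unfolding map_add_upto[symmetric]
  by (simp add: shift_hat_def shift_def global_list_def fun_eq_iff comp_def algebra_simps)

lemma funpow_shift_hat_global_list:
  "(shift_hat ^^ j) (global_list [a..b] f) = global_list [a + int j..b + int j] f"
  by (induction j) (simp_all add: shift_hat_global_list ac_simps)

lemma refl_hat_global_list: "refl_hat (global_list [a..b] f) = global_list [- b..- a] (f \<circ> rev)"
  by (simp add: refl_hat_def refl_cfg_def global_list_def fun_eq_iff comp_def rev_map
      flip: map_uminus_upto)

lemma perm_hat_global_list: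
  "perm_hat \<nu> (global_list L f) = global_list L (\<lambda>w. \<nu> (f (map (inv \<nu>) w)))"
  by (simp add: perm_hat_def global_list_def fun_eq_iff comp_def)

definition refl_shift_hat :: "nat \<Rightarrow> 'a gmap \<Rightarrow> 'a gmap" where
  "refl_shift_hat n \<Phi> = (shift_hat ^^ (n + 1)) (refl_hat \<Phi>)"

lemma refl_shift_hat_global_list:
  "refl_shift_hat n (global_list [1..int n] f) = global_list [1..int n] (f \<circ> rev)"
  unfolding refl_shift_hat_def refl_hat_global_list funpow_shift_hat_global_list by simp

lemma inj_shift_hat: "inj shift_hat"
proof (rule injI)
  fix \<Phi> \<Psi> :: "'a gmap" assume eq: "shift_hat \<Phi> = shift_hat \<Psi>"
  show "\<Phi> = \<Psi>"
  proof (intro ext)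
    fix x i
    show "\<Phi> x i = \<Psi> x i"
      using fun_cong[OF fun_cong[OF eq, of x], of "i - 1"] by (simp add: shift_hat_def shift_def)
  qed
qed

lemma refl_hat_refl_hat [simp]: "refl_hat (refl_hat \<Phi>) = \<Phi>"
  by (simp add: refl_hat_def refl_cfg_def fun_eq_iff)

lemma perm_hat_inv_perm_hat: "bij \<nu> \<Longrightarrow> perm_hat (inv \<nu>) (perm_hat \<nu> \<Phi>) = \<Phi>"
  by (simp add: perm_hat_def fun_eq_iff comp_def inv_inv_eq bij_is_inj)

lemma funpow_shift_hat_apply: "(shift_hat ^^ j) \<Phi> x i = \<Phi> x (i + int j)"
  by (induction j arbitrary: i) (simp_all add: shift_hat_def shift_def algebra_simps)

lemma refl_shift_hat_refl_shift_hat [simp]: "refl_shift_hat n (refl_shift_hat n \<Phi>) = \<Phi>"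
  unfolding refl_shift_hat_def fun_eq_iff funpow_shift_hat_apply
  by (simp add: refl_hat_def refl_cfg_def funpow_shift_hat_apply)

lemma Shat_gens_eq: "Shat_gens n = insert (refl_shift_hat n) {perm_hat \<nu> | \<nu>. bij \<nu>}"
  by (auto simp: Shat_gens_def refl_shift_hat_def[abs_def])

lemma equivp_gen_orbit: "equivp (gen_orbit T)"
  unfolding gen_orbit_def by (rule equivp_rtranclp) (auto simp: symp_def)

lemma gen_orbit_refl: "gen_orbit T x x"
  using equivp_gen_orbit equivp_reflp by metis

lemma gen_orbit_sym: "gen_orbit T x y \<Longrightarrow> gen_orbit T y x"
  using equivp_gen_orbit equivp_symp by metis

lemma gen_orbit_trans [trans]: "gen_orbit T x y \<Longrightarrow> gen_orbit T y z \<Longrightarrow> gen_orbit T x z"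
  using equivp_gen_orbit equivp_transp by metis

lemma gen_orbit_step: "t \<in> T \<Longrightarrow> gen_orbit T x (t x)"
  unfolding gen_orbit_def by (rule r_into_rtranclp) blast

lemma gen_orbit_induct [consumes 1, case_names base step]:
  assumes "gen_orbit T x y" "P x"
    and "\<And>t a b. t \<in> T \<Longrightarrow> P a \<Longrightarrow> b = t a \<or> a = t b \<Longrightarrow> P b"
  shows "P y"
  using assms(1,2) unfolding gen_orbit_def
  by (induction rule: rtranclp_induct) (use assms(3) in blast)+

lemma gen_orbit_mono:
  assumes "gen_orbit T x y" and "\<And>t z. t \<in> T \<Longrightarrow> gen_orbit T' z (t z)"
  shows "gen_orbit T' x y"
  using assms(1)
proof (induction rule: gen_orbit_induct)
  case base then show ?case by (rule gen_orbit_refl)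
next
  case (step t a b)
  then have "gen_orbit T' a b" using assms(2) gen_orbit_sym by metis
  with step.IH show ?case by (rule gen_orbit_trans)
qed

section \<open>The orbit relation on rules\<close>

lemma rule_orbit_rel_refl: "rule_orbit_rel n f f"
  unfolding rule_orbit_rel_def by (rule exI[of _ id], rule exI[of _ False]) simp

lemma rule_orbit_rel_cong:
  "rule_orbit_rel n f g \<Longrightarrow> (\<And>w. length w = n \<Longrightarrow> g w = g' w) \<Longrightarrow> rule_orbit_rel n f g'"
  unfolding rule_orbit_rel_def by metis

lemma rule_orbit_rel_act:
  assumes "rule_orbit_rel n f g" and \<nu>: "bij \<nu>"
  shows "rule_orbit_rel n f (\<lambda>w. \<nu> (g (map (inv \<nu>) (if b then rev w else w))))"
proof -
  obtain \<mu> c where \<mu>: "bij \<mu>"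
    and g: "\<And>w. length w = n \<Longrightarrow> g w = \<mu> (f (map (inv \<mu>) (if c then rev w else w)))"
    using assms(1) unfolding rule_orbit_rel_def by blast
  have "\<nu> (g (map (inv \<nu>) (if b then rev w else w)))
      = (\<nu> \<circ> \<mu>) (f (map (inv (\<nu> \<circ> \<mu>)) (if b \<noteq> c then rev w else w)))" if "length w = n" for w
    using that by (cases b; cases c) (simp_all add: g o_inv_distrib[OF \<nu> \<mu>] rev_map)
  then show ?thesis
    unfolding rule_orbit_rel_def using bij_comp[OF \<mu> \<nu>] by blast
qed

lemma rule_orbit_rel_rev: "rule_orbit_rel n f g \<Longrightarrow> rule_orbit_rel n f (g \<circ> rev)"
  using rule_orbit_rel_act[of n f g id True] by (simp add: comp_def)

lemma rule_orbit_rel_perm: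
  "rule_orbit_rel n f g \<Longrightarrow> bij \<nu> \<Longrightarrow> rule_orbit_rel n f (\<lambda>w. \<nu> (g (map (inv \<nu>) w)))"
  using rule_orbit_rel_act[of n f g \<nu> False] by simp

lemma rule_orbit_rel_trans:
  assumes "rule_orbit_rel n f g" "rule_orbit_rel n g h"
  shows "rule_orbit_rel n f h"
proof -
  obtain \<nu> b where \<nu>: "bij \<nu>"
    and h: "\<And>w. length w = n \<Longrightarrow> h w = \<nu> (g (map (inv \<nu>) (if b then rev w else w)))"
    using assms(2) unfolding rule_orbit_rel_def by blast
  show ?thesis by (rule rule_orbit_rel_cong[OF rule_orbit_rel_act[OF assms(1) \<nu>]]) (simp add: h)
qed

lemma rule_orbit_rel_sym:
  assumes "rule_orbit_rel n f g"
  shows "rule_orbit_rel n g f"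
proof -
  obtain \<nu> b where \<nu>: "bij \<nu>"
    and g: "\<And>w. length w = n \<Longrightarrow> g w = \<nu> (f (map (inv \<nu>) (if b then rev w else w)))"
    using assms unfolding rule_orbit_rel_def by blast
  have inv_\<nu>: "inv \<nu> (\<nu> z) = z" "inv (inv \<nu>) = \<nu>" for z
    using \<nu> by (simp_all add: bij_is_inj inv_inv_eq)
  have "inv \<nu> (g (map (inv (inv \<nu>)) (if b then rev w else w))) = f w" if "length w = n" for w
    using that by (cases b) (simp_all add: g inv_\<nu> rev_map comp_def)
  then show ?thesis
    using rule_orbit_rel_cong[OF rule_orbit_rel_act[OF rule_orbit_rel_refl bij_imp_bij_inv[OF \<nu>]]]
    by blast
qed

lemma depends_on_all_cong:
  "depends_on_all n f \<Longrightarrow> (\<And>w. length w = n \<Longrightarrow> f w = g w) \<Longrightarrow> depends_on_all n g"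
  unfolding depends_on_all_def by (metis length_list_update)

lemma depends_on_all_rev:
  assumes "depends_on_all n f"
  shows "depends_on_all n (f \<circ> rev)"
  unfolding depends_on_all_def
proof (intro allI impI)
  fix i assume i: "i < n"
  then obtain w a where w: "length w = n" "f (w[n - Suc i := a]) \<noteq> f w"
    using assms unfolding depends_on_all_def by (meson diff_Suc_less le_less_trans zero_le)
  have "rev ((rev w)[i := a]) = w[n - Suc i := a]"
    using rev_update[of i "rev w" a] i w(1) by simp
  then show "\<exists>w a. length w = n \<and> (f \<circ> rev) (w[i := a]) \<noteq> (f \<circ> rev) w"
    using w by (intro exI[of _ "rev w"] exI[of _ a]) auto
qed

lemma depends_on_all_perm:
  assumes "depends_on_all n f" "bij \<nu>"
  shows "depends_on_all n (\<lambda>w. \<nu> (f (map (inv \<nu>) w)))"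
  unfolding depends_on_all_def
proof (intro allI impI)
  fix i assume "i < n"
  then obtain w a where w: "length w = n" "f (w[i := a]) \<noteq> f w"
    using assms(1) unfolding depends_on_all_def by blast
  have inv_\<nu>: "inv \<nu> (\<nu> z) = z" for z using assms(2) by (simp add: bij_is_inj)
  have "map (inv \<nu>) (map \<nu> u) = u" for u by (simp add: inv_\<nu> comp_def)
  then show "\<exists>w a. length w = n \<and> \<nu> (f (map (inv \<nu>) (w[i := a]))) \<noteq> \<nu> (f (map (inv \<nu>) w))"
    using w bij_is_inj[OF assms(2)]
    by (intro exI[of _ "map \<nu> w"] exI[of _ "\<nu> a"]) (auto simp: map_update inv_\<nu> inj_eq)
qed

lemma depends_on_all_rule_orbit:
  assumes f: "depends_on_all n f" and "rule_orbit_rel n f g"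
  shows "depends_on_all n g"
proof -
  obtain \<nu> b where \<nu>: "bij \<nu>"
    and g: "\<And>w. length w = n \<Longrightarrow> g w = \<nu> (f (map (inv \<nu>) (if b then rev w else w)))"
    using assms(2) unfolding rule_orbit_rel_def by blast
  define f' where "f' = (if b then f \<circ> rev else f)"
  have "depends_on_all n f'" using f depends_on_all_rev[OF f] by (simp add: f'_def)
  then have "depends_on_all n (\<lambda>w. \<nu> (f' (map (inv \<nu>) w)))" using \<nu> by (rule depends_on_all_perm)
  then show ?thesis by (rule depends_on_all_cong) (simp add: g f'_def rev_map)
qed

lemma rule_orbit_imp_Shat_orbit:
  assumes "rule_orbit_rel n f g"
  shows "gen_orbit (Shat_gens n) (global_list [1..int n] f) (global_list [1..int n] g)"
proof -
  obtain \<nu> b where \<nu>: "bij \<nu>"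
    and g: "\<And>w. length w = n \<Longrightarrow> g w = \<nu> (f (map (inv \<nu>) (if b then rev w else w)))"
    using assms unfolding rule_orbit_rel_def by blast
  define f' where "f' = (if b then f \<circ> rev else f)"
  have "gen_orbit (Shat_gens n) (global_list [1..int n] f) (global_list [1..int n] f')"
  proof (cases b)
    case True
    have "gen_orbit (Shat_gens n) (global_list [1..int n] f) (refl_shift_hat n (global_list [1..int n] f))"
      by (rule gen_orbit_step) (simp add: Shat_gens_eq)
    with True show ?thesis by (simp add: f'_def refl_shift_hat_global_list)
  qed (simp add: f'_def gen_orbit_refl)
  also have "gen_orbit (Shat_gens n) \<dots> (perm_hat \<nu> (global_list [1..int n] f'))"
    by (rule gen_orbit_step) (auto simp: Shat_gens_eq \<nu>)
  also have "perm_hat \<nu> (global_list [1..int n] f') = global_list [1..int n] g"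
    unfolding perm_hat_global_list by (rule global_list_cong) (simp add: g f'_def rev_map)
  finally show ?thesis .
qed

lemma Shat_orbit_of_window:
  assumes "gen_orbit (Shat_gens n) (global_list [1..int n] f) \<Psi>"
  shows "\<exists>g. rule_orbit_rel n f g \<and> \<Psi> = global_list [1..int n] g"
  using assms
proof (induction rule: gen_orbit_induct)
  case base then show ?case using rule_orbit_rel_refl by blast
next
  case (step t \<Phi> \<Psi>)
  then obtain g where g: "rule_orbit_rel n f g" and \<Phi>: "\<Phi> = global_list [1..int n] g" by blast
  from step.hyps(1) consider "t = refl_shift_hat n" | \<nu> where "bij \<nu>" "t = perm_hat \<nu>"
    by (auto simp: Shat_gens_eq)
  then show ?case
  proof cases
    case 1
    then have "\<Psi> = refl_shift_hat n \<Phi>" using step.hyps(2) by auto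
    then show ?thesis using \<Phi> rule_orbit_rel_rev[OF g] by (auto simp: refl_shift_hat_global_list)
  next
    case (2 \<nu>)
    then obtain \<mu> where "bij \<mu>" "\<Psi> = perm_hat \<mu> \<Phi>"
      using step.hyps(2) perm_hat_inv_perm_hat bij_imp_bij_inv by metis
    then show ?thesis using \<Phi> rule_orbit_rel_perm[OF g] by (auto simp: perm_hat_global_list)
  qed
qed

lemma Shat_orbit_window_iff:
  "gen_orbit (Shat_gens n) (global_list [1..int n] f) (global_list [1..int n] g)
     \<longleftrightarrow> rule_orbit_rel n f g"
proof
  assume "gen_orbit (Shat_gens n) (global_list [1..int n] f) (global_list [1..int n] g)"
  then obtain g' where fg': "rule_orbit_rel n f g'"
    and eq: "global_list [1..int n] g' = global_list [1..int n] g"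
    using Shat_orbit_of_window by metis
  have "g' w = g w" if "length w = n" for w
    using global_list_eq_on_words[OF eq] that by simp
  then show "rule_orbit_rel n f g" by (rule rule_orbit_rel_cong[OF fg'])
qed (rule rule_orbit_imp_Shat_orbit)

lemma Shat_orbit_imp_gcong: "gen_orbit (Shat_gens n) \<Phi> \<Psi> \<Longrightarrow> gcong \<Phi> \<Psi>"
  unfolding gcong_def
proof (rule gen_orbit_mono)
  have shifts: "gen_orbit cong_gens \<Phi> ((shift_hat ^^ j) \<Phi>)" for j \<Phi>
    by (induction j) (auto simp: cong_gens_def gen_orbit_refl intro: gen_orbit_trans gen_orbit_step)
  fix t \<Phi> assume "t \<in> Shat_gens n"
  then consider "t = refl_shift_hat n" | \<nu> where "bij \<nu>" "t = perm_hat \<nu>"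
    by (auto simp: Shat_gens_eq)
  then show "gen_orbit cong_gens \<Phi> (t \<Phi>)"
  proof cases
    case 1
    have "gen_orbit cong_gens \<Phi> (refl_hat \<Phi>)" by (rule gen_orbit_step) (simp add: cong_gens_def)
    then show ?thesis using 1 shifts gen_orbit_trans unfolding refl_shift_hat_def by metis
  qed (auto simp: cong_gens_def intro: gen_orbit_step)
qed

lemma gcong_of_window:
  assumes "gcong (global_list [1..int n] f) \<Psi>"
  shows "\<exists>k g. rule_orbit_rel n f g \<and> \<Psi> = global_list [k + 1..k + int n] g"
  using assms[unfolded gcong_def]
proof (induction rule: gen_orbit_induct)
  case base
  show ?case by (intro exI[of _ 0] exI[of _ f]) (simp add: rule_orbit_rel_refl)
next
  case (step t \<Phi> \<Psi>)
  then obtain k g where g: "rule_orbit_rel n f g" and \<Phi>: "\<Phi> = global_list [k + 1..k + int n] g"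
    by blast
  from step.hyps(1) consider "t = shift_hat" | "t = refl_hat" | \<nu> where "bij \<nu>" "t = perm_hat \<nu>"
    by (auto simp: cong_gens_def)
  then show ?case
  proof cases
    case 1
    from step.hyps(2) consider "\<Psi> = shift_hat \<Phi>" | "\<Phi> = shift_hat \<Psi>" unfolding 1 by blast
    then show ?thesis
    proof cases
      case 1
      then have "\<Psi> = global_list [(k + 1) + 1..(k + 1) + int n] g"
        using \<Phi> by (simp add: shift_hat_global_list ac_simps)
      then show ?thesis using g by blast
    next
      case 2
      then have "shift_hat \<Psi> = shift_hat (global_list [(k - 1) + 1..(k - 1) + int n] g)"
        using \<Phi> by (simp add: shift_hat_global_list)
      then have "\<Psi> = global_list [(k - 1) + 1..(k - 1) + int n] g"
        by (rule injD[OF inj_shift_hat])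
      then show ?thesis using g by blast
    qed
  next
    case 2
    then have "\<Psi> = refl_hat \<Phi>" using step.hyps(2) by auto
    also have "\<dots> = global_list [(- k - int n - 1) + 1..(- k - int n - 1) + int n] (g \<circ> rev)"
      using \<Phi> by (simp add: refl_hat_global_list)
    finally show ?thesis using rule_orbit_rel_rev[OF g] by blast
  next
    case (3 \<nu>)
    then obtain \<mu> where "bij \<mu>" "\<Psi> = perm_hat \<mu> \<Phi>"
      using step.hyps(2) perm_hat_inv_perm_hat bij_imp_bij_inv by metis
    then show ?thesis using \<Phi> rule_orbit_rel_perm[OF g] by (auto simp: perm_hat_global_list)
  qed
qed

section \<open>Rescaling\<close>

lemma sorted_list_of_set_image:
  assumes "finite M" and "strict_mono_on M s"
  shows "sorted_list_of_set (s ` M) = map s (sorted_list_of_set M)"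
proof (rule sorted_distinct_set_unique)
  have "sorted_wrt (<) (map s (sorted_list_of_set M))"
    unfolding sorted_wrt_map
    by (rule sorted_wrt_mono_rel[OF _ strict_sorted_list_of_set])
      (use assms in \<open>auto simp: strict_mono_on_def\<close>)
  then show "sorted (map s (sorted_list_of_set M))" "distinct (map s (sorted_list_of_set M))"
    by (simp_all add: strict_sorted_iff)
qed (use assms in auto)

lemma scaled_imp_global_list:
  assumes "scaled v \<Phi> \<Psi>" and "v > 0"
  obtains L f where "\<Phi> = global_list L f" "\<Psi> = global_list (map (\<lambda>m. \<lfloor>v * of_int m\<rfloor>) L) f"
proof -
  obtain M f where M: "finite M" "\<forall>m\<in>M. v * of_int m \<in> \<int>"
    and \<Phi>: "\<Phi> = global M f" and \<Psi>: "\<Psi> = global ((\<lambda>m. \<lfloor>v * of_int m\<rfloor>) ` M) f"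
    using assms(1) unfolding scaled_def by blast
  txt \<open>The floor is exact on M, so it does not merge cells.\<close>
  have "strict_mono_on M (\<lambda>m. \<lfloor>v * of_int m\<rfloor>)"
  proof (rule strict_mono_onI)
    fix a b assume "a \<in> M" "b \<in> M" "a < b"
    then obtain i j where i: "v * of_int a = of_int i" and j: "v * of_int b = of_int j"
      using M(2) Ints_cases by metis
    have "v * of_int a < v * of_int b" using \<open>a < b\<close> \<open>v > 0\<close> by simp
    then show "\<lfloor>v * of_int a\<rfloor> < \<lfloor>v * of_int b\<rfloor>" by (simp add: i j)
  qed
  with M(1) \<Phi> \<Psi> that show ?thesis by (simp add: global_eq_global_list sorted_list_of_set_image)
qed

lemma gsim_window_imp_rule_orbit:
  assumes h: "depends_on_all n h"
    and "gsim (global_list [1..int n] f) (global_list [1..int n] h)"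
  shows "rule_orbit_rel n f h"
proof -
  obtain \<Phi> \<Psi> v where "v > 0" and \<Phi>: "gcong (global_list [1..int n] f) \<Phi>"
    and \<Psi>: "gcong (global_list [1..int n] h) \<Psi>" and "scaled v \<Phi> \<Psi>"
    using assms(2) unfolding gsim_def by blast
  obtain k g where fg: "rule_orbit_rel n f g" and \<Phi>_eq: "\<Phi> = global_list [k + 1..k + int n] g"
    using gcong_of_window[OF \<Phi>] by blast
  obtain k' g' where hg': "rule_orbit_rel n h g'" and \<Psi>_eq: "\<Psi> = global_list [k' + 1..k' + int n] g'"
    using gcong_of_window[OF \<Psi>] by blast
  define s where "s = (\<lambda>m::int. \<lfloor>v * of_int m\<rfloor>)"
  obtain L f' where "\<Phi> = global_list L f'" "\<Psi> = global_list (map s L) f'"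
    using scaled_imp_global_list[OF \<open>scaled v \<Phi> \<Psi>\<close> \<open>v > 0\<close>] unfolding s_def by blast
  then have "global_list (map s [k + 1..k + int n]) g = global_list (map s L) f'"
    using \<Phi>_eq by (metis global_list_map)
  then have eq: "global_list (map s [k + 1..k + int n]) g = global_list [k' + 1..k' + int n] g'"
    using \<open>\<Psi> = global_list (map s L) f'\<close> \<Psi>_eq by simp
  have "sorted (map s [k + 1..k + int n])"
    unfolding sorted_wrt_map s_def
    by (rule sorted_wrt_mono_rel[OF _ sorted_upto]) (use \<open>v > 0\<close> in \<open>auto intro: floor_mono\<close>)
  moreover have "depends_on_all n g'" using depends_on_all_rule_orbit[OF h hg'] .
  ultimately have "map s [k + 1..k + int n] = [k' + 1..k' + int n]"
    using window_unique[OF eq] by simp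
  with eq have "global_list [k' + 1..k' + int n] g = global_list [k' + 1..k' + int n] g'" by simp
  then have "g w = g' w" if "length w = n" for w
    by (rule global_list_eq_on_words) (simp_all add: that)
  then have "rule_orbit_rel n f g'" by (rule rule_orbit_rel_cong[OF fg])
  then show ?thesis using rule_orbit_rel_trans rule_orbit_rel_sym[OF hg'] by blast
qed

section \<open>Counting classes\<close>

lemma quot_eq_image: "quot X R = (\<lambda>x. {y \<in> X. R x y}) ` X"
  unfolding quot_def quotient_def by auto

lemma quot_cong: "(\<And>x y. x \<in> X \<Longrightarrow> y \<in> X \<Longrightarrow> R x y \<longleftrightarrow> S x y) \<Longrightarrow> quot X R = quot X S"
  unfolding quot_eq_image by auto

lemma card_quot_inj_on:
  assumes "inj_on F X" and "\<And>x x'. x \<in> X \<Longrightarrow> x' \<in> X \<Longrightarrow> R x x' \<longleftrightarrow> S (F x) (F x')"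
  shows "card (quot X R) = card (quot (F ` X) S)"
proof -
  have "{y \<in> F ` X. S (F x) y} = F ` {x' \<in> X. R x x'}" if "x \<in> X" for x
    using assms(2) that by auto
  then have "quot (F ` X) S = image F ` quot X R"
    unfolding quot_eq_image by (auto simp: image_image)
  moreover have "inj_on (image F) (quot X R)"
    unfolding quot_eq_image by (rule inj_onI) (auto simp: inj_on_image_eq_iff[OF assms(1)])
  ultimately show ?thesis by (simp add: card_image)
qed

lemma card_quot_coarser:
  assumes "finite X" and "\<And>x. x \<in> X \<Longrightarrow> R x x"
    and "\<And>x x' y. x \<in> X \<Longrightarrow> x' \<in> X \<Longrightarrow> y \<in> X \<Longrightarrow> R x x' \<Longrightarrow> S x' y \<Longrightarrow> S x y"
  shows "card (quot X S) \<le> card (quot X R)"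
proof -
  have "{y \<in> X. \<exists>x'\<in>{x' \<in> X. R x x'}. S x' y} = {y \<in> X. S x y}" if "x \<in> X" for x
    using assms(2,3) that by blast
  then have "quot X S \<subseteq> (\<lambda>C. {y \<in> X. \<exists>x\<in>C. S x y}) ` quot X R"
    unfolding quot_eq_image by blast
  moreover have "finite (quot X R)" unfolding quot_eq_image using assms(1) by simp
  ultimately show ?thesis by (meson card_image_le card_mono finite_imageI order_trans)
qed

lemma card_quot_mono:
  assumes "finite Y" and "X \<subseteq> Y"
  shows "card (quot X R) \<le> card (quot Y R)"
proof -
  have "quot X R \<subseteq> (\<lambda>C. C \<inter> X) ` quot Y R"
    unfolding quot_eq_image using assms(2) by blast
  moreover have "finite (quot Y R)" unfolding quot_eq_image using assms(1) by simp
  ultimately show ?thesis by (meson card_image_le card_mono finite_imageI order_trans)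
qed

lemma G_eq_image: "G n = global {1..int n} ` Lrules n"
  by (auto simp: G_def)

lemma Gbar_eq_image: "Gbar n = global {1..int n} ` Lbar n"
  by (auto simp: Gbar_def)

lemma Lbar_subset_Lrules: "Lbar n \<subseteq> Lrules n"
  by (auto simp: Lbar_def)

lemma Gbar_subset_G: "Gbar n \<subseteq> G n"
  using Lbar_subset_Lrules by (auto simp: G_eq_image Gbar_eq_image)

lemma finite_Lrules: "finite (Lrules n :: ('a::finite list \<Rightarrow> 'a) set)"
proof -
  have "finite {f :: 'a list \<Rightarrow> 'a. \<forall>w. (w \<in> {w. length w = n} \<longrightarrow> f w \<in> UNIV)
      \<and> (w \<notin> {w. length w = n} \<longrightarrow> f w = undefined)}"
    using finite_lists_length_eq[of "UNIV :: 'a set" n] by (intro finite_set_of_finite_funs) simp_all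
  then show ?thesis by (simp add: Lrules_def)
qed

lemma finite_G: "finite (G n :: 'a::finite gmap set)"
  by (simp add: G_eq_image finite_Lrules)

lemma inj_on_global_Lrules: "inj_on (global {1..int n}) (Lrules n :: ('a list \<Rightarrow> 'a) set)"
proof (rule inj_onI)
  fix f g :: "'a list \<Rightarrow> 'a" assume f: "f \<in> Lrules n" and g: "g \<in> Lrules n"
    and eq: "global {1..int n} f = global {1..int n} g"
  show "f = g"
  proof
    fix w
    show "f w = g w"
    proof (cases "length w = n")
      case True
      with eq show ?thesis by (simp add: global_interval global_list_eq_on_words)
    next
      case False
      with f g show ?thesis by (simp add: Lrules_def)
    qed
  qed
qed

lemma card_quot_rule_orbit_rel:
  assumes "X \<subseteq> Lrules n"
  shows "card (quot X (rule_orbit_rel n))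
    = card (quot (global {1..int n} ` X) (gen_orbit (Shat_gens n)))"
  using inj_on_subset[OF inj_on_global_Lrules assms]
  by (rule card_quot_inj_on) (simp add: global_interval Shat_orbit_window_iff)

lemma gcong_refl: "gcong \<Phi> \<Phi>"
  unfolding gcong_def by (rule gen_orbit_refl)

lemma gcong_sym: "gcong \<Phi> \<Psi> \<Longrightarrow> gcong \<Psi> \<Phi>"
  unfolding gcong_def by (rule gen_orbit_sym)

lemma gcong_trans: "gcong \<Phi> \<Psi> \<Longrightarrow> gcong \<Psi> \<Theta> \<Longrightarrow> gcong \<Phi> \<Theta>"
  unfolding gcong_def by (rule gen_orbit_trans)

lemma gsim_gcong_left: "gcong \<Phi> \<Phi>' \<Longrightarrow> gsim \<Phi>' \<Psi> \<Longrightarrow> gsim \<Phi> \<Psi>"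
  unfolding gsim_def using gcong_trans by blast

lemma gcong_imp_gsim:
  assumes "\<Phi> \<in> G n" and "gcong \<Phi> \<Psi>"
  shows "gsim \<Phi> \<Psi>"
proof -
  obtain f where \<Phi>: "\<Phi> = global {1..int n} f" using assms(1) by (auto simp: G_def)
  have "scaled 1 \<Phi> \<Phi>"
    unfolding scaled_def \<Phi> by (intro exI[of _ "{1..int n}"] exI[of _ f]) simp
  then show ?thesis
    unfolding gsim_def using gcong_refl gcong_sym[OF assms(2)] zero_less_one by blast
qed

lemma Gbar_gsim_imp_Shat_orbit:
  assumes "\<Phi> \<in> Gbar n" "\<Psi> \<in> Gbar n" and "gsim \<Phi> \<Psi>"
  shows "gen_orbit (Shat_gens n) \<Phi> \<Psi>"
proof -
  obtain f h where "h \<in> Lbar n" and \<Phi>: "\<Phi> = global_list [1..int n] f"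
    and \<Psi>: "\<Psi> = global_list [1..int n] h"
    using assms(1,2) by (auto simp: Gbar_eq_image global_interval)
  then have "depends_on_all n h" by (simp add: Lbar_def depends_on_all_def)
  from this assms(3) have "rule_orbit_rel n f h" unfolding \<Phi> \<Psi> by (rule gsim_window_imp_rule_orbit)
  then show ?thesis unfolding \<Phi> \<Psi> by (rule rule_orbit_imp_Shat_orbit)
qed

lemma Gbar_Shat_orbit_iff_gsim:
  "\<Phi> \<in> Gbar n \<Longrightarrow> \<Psi> \<in> Gbar n \<Longrightarrow> gen_orbit (Shat_gens n) \<Phi> \<Psi> \<longleftrightarrow> gsim \<Phi> \<Psi>"
  using Gbar_gsim_imp_Shat_orbit Shat_orbit_imp_gcong gcong_imp_gsim Gbar_subset_G by blast

lemma Gbar_gcong_iff_gsim: "\<Phi> \<in> Gbar n \<Longrightarrow> \<Psi> \<in> Gbar n \<Longrightarrow> gcong \<Phi> \<Psi> \<longleftrightarrow> gsim \<Phi> \<Psi>"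
  using Gbar_gsim_imp_Shat_orbit Shat_orbit_imp_gcong gcong_imp_gsim Gbar_subset_G by blast

theorem proposition12:
  fixes n :: nat
  shows "card (quot (Lbar n :: ('a::finite list \<Rightarrow> 'a) set) (rule_orbit_rel n))
           = card (quot (Gbar n :: 'a gmap set) (gen_orbit (Shat_gens n)))
       \<and> card (quot (Gbar n :: 'a gmap set) (gen_orbit (Shat_gens n)))
           = card (quot (Gbar n :: 'a gmap set) gsim)
       \<and> card (quot (Gbar n :: 'a gmap set) gsim)
           = card (quot (Gbar n :: 'a gmap set) gcong)
       \<and> card (quot (Lrules n :: ('a list \<Rightarrow> 'a) set) (rule_orbit_rel n))
           = card (quot (G n :: 'a gmap set) (gen_orbit (Shat_gens n)))
       \<and> card (quot (Gbar n :: 'a gmap set) (gen_orbit (Shat_gens n)))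
           \<le> card (quot (G n :: 'a gmap set) gsim)
       \<and> card (quot (G n :: 'a gmap set) gsim)
           \<le> card (quot (G n :: 'a gmap set) gcong)
       \<and> card (quot (G n :: 'a gmap set) gcong)
           \<le> card (quot (G n :: 'a gmap set) (gen_orbit (Shat_gens n)))"
proof -
  have Shat_gsim: "quot (Gbar n :: 'a gmap set) (gen_orbit (Shat_gens n)) = quot (Gbar n :: 'a gmap set) gsim"
    by (rule quot_cong) (rule Gbar_Shat_orbit_iff_gsim)
  have gsim_gcong: "quot (Gbar n :: 'a gmap set) gsim = quot (Gbar n :: 'a gmap set) gcong"
    by (rule quot_cong) (simp add: Gbar_gcong_iff_gsim)
  have "card (quot (Lbar n :: ('a list \<Rightarrow> 'a) set) (rule_orbit_rel n))
      = card (quot (Gbar n :: 'a gmap set) (gen_orbit (Shat_gens n)))"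
    unfolding Gbar_eq_image by (rule card_quot_rule_orbit_rel[OF Lbar_subset_Lrules])
  moreover have "card (quot (Lrules n :: ('a list \<Rightarrow> 'a) set) (rule_orbit_rel n))
      = card (quot (G n :: 'a gmap set) (gen_orbit (Shat_gens n)))"
    unfolding G_eq_image by (rule card_quot_rule_orbit_rel) simp
  moreover have "card (quot (Gbar n :: 'a gmap set) gsim) \<le> card (quot (G n :: 'a gmap set) gsim)"
    by (rule card_quot_mono[OF finite_G Gbar_subset_G])
  moreover have "card (quot (G n :: 'a gmap set) gsim) \<le> card (quot (G n :: 'a gmap set) gcong)"
    using finite_G by (rule card_quot_coarser) (auto intro: gcong_refl gsim_gcong_left)
  moreover have "card (quot (G n :: 'a gmap set) gcong) \<le> card (quot (G n :: 'a gmap set) (gen_orbit (Shat_gens n)))"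
    using finite_G
    by (rule card_quot_coarser) (auto intro: gen_orbit_refl gcong_trans Shat_orbit_imp_gcong)
  ultimately show ?thesis using Shat_gsim gsim_gcong by simp
qed

end
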